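(* Let $(g,p)$ be any mechanism and let $(v,x,y)$ be a random triple whose law is both bidder-symmetric and item-symmetric. Then $$\mathbb E\Big[\sum_{i=1}^n[\mathcal Q_3 p]_i(v,x,y)\Big]=\mathbb E\Big[\sum_{i=1}^n p_i(v,x,y)\Big]$$ and $$\mathbb E\Big[\sum_{i=1}^n reg_i(v,x,y)\Big]-\mathbb E\Big[\sum_{i=1}^n[\mathcal Q_3\, reg]_i(v,x,y)\Big]=\mathbb E\big[\Delta_3(g,p;v,x,y)\big]\ge0 .$$
   Context: Setup: $n$ bidders, $m$ items, bidder contexts $x=(x_1,\dots,x_n)\in\mathcal X^n$, item contexts $y=(y_1,\dots,y_m)\in\mathcal Y^m$, valuation/bid matrix $v=(v_{ij})\in\mathcal V^{n\times m}$ with $\mathcal V\subseteq\mathbb R_{\ge0}$; $v_i$ is row $i$ and $(v_i',v_{-i})$ is $v$ with row $i$ replaced by $v_i'$. A mechanism is $(g,p)$ with $g:\mathcal V^{n\times m}\times\mathcal X^n\times\mathcal Y^m\to\mathbb R^{n\times m}$ and $p:\mathcal V^{n\times m}\times\mathcal X^n\times\mathcal Y^m\to\mathbb R^{n}$ (column vector). Utility: $u_i(v_i,b,x,y)=\sum_j g_{ij}(b,x,y)v_{ij}-p_i(b,x,y)$; ex-post regret: $reg_i(v,x,y)=\max_{b_i'\in\mathcal V^m}u_i(v_i,(b_i',v_{-i}),x,y)-u_i(v_i,v,x,y)$. For a permutation matrix $\sigma_n\in S_n$, $\sigma_nv$ permutes rows, $\sigma_nx$ permutes bidder contexts, $\sigma_np$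 permutes entries of $p$; for $\sigma_m\in S_m$, $v\sigma_m$ permutes columns and $y\sigma_m$ permutes item contexts. Bidder-item aggregated averaging: $\mathcal Q_3 g(v,x,y)=\frac1{n!m!}\sum_{\sigma_n\in S_n}\sum_{\sigma_m\in S_m}\sigma_n^{-1}g(\sigma_nv\sigma_m,\sigma_nx,y\sigma_m)\sigma_m^{-1}$, $\mathcal Q_3 p(v,x,y)=\frac1{n!m!}\sum_{\sigma_n}\sum_{\sigma_m}\sigma_n^{-1}p(\sigma_nv\sigma_m,\sigma_nx,y\sigma_m)$. $\mathcal Q_3u$ and $\mathcal Q_3\,reg$ are the utility and ex-post regret induced by $(\mathcal Q_3g,\mathcal Q_3p)$. Regret gap: $\Delta_3(g,p;v,x,y)=\max_{v'\in\mathcal V^{n\times m}}\sum_{i}u_i(v_i,(v_i',v_{-i}),x,y)-\max_{v'\in\mathcal V^{n\times m}}\sum_{i}[\mathcal Q_3u]_i(v_i,(v_i',v_{-i}),x,y)$. The law of $(v,x,y)$ is bidder-symmetric if $(\sigma_nv,\sigma_nx,y)$ has the same law as $(v,x,y)$ for all $\sigma_n\in S_n$, and item-symmetric if $(v\sigma_m,x,y\sigma_m)$ has the same law as $(v,x,y)$ for all $\sigma_m\in S_m$. All maxima are assumed attained and all functions measurable with finite expectations. *)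

theory Defs
  imports "HOL-Analysis.Analysis" "HOL-Probability.Probability"
begin

text \<open>Bidders are indexed by a finite type 'n, items by a finite type 'm.
  A valuation/bid matrix is a function 'n => 'm => real (row i = bidder i).
  Bidder contexts: 'n => 'x; item contexts: 'm => 'y.\<close>

definition Vvec :: "real set \<Rightarrow> ('m \<Rightarrow> real) set" where
  "Vvec V = {b. \<forall>j. b j \<in> V}"

definition Vmat :: "real set \<Rightarrow> ('n \<Rightarrow> 'm \<Rightarrow> real) set" where
  "Vmat V = {v. \<forall>i j. v i j \<in> V}"

definition rowperm :: "('n \<Rightarrow> 'n) \<Rightarrow> ('n \<Rightarrow> 'a) \<Rightarrow> ('n \<Rightarrow> 'a)" where
  "rowperm \<pi> v = (\<lambda>i. v (\<pi> i))"

definition colperm :: "('m \<Rightarrow> 'm) \<Rightarrow> ('n \<Rightarrow> 'm \<Rightarrow> 'a) \<Rightarrow> ('n \<Rightarrow> 'm \<Rightarrow> 'a)" where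
  "colperm \<tau> v = (\<lambda>i j. v i (\<tau> j))"

definition Q3g ::
  "(('n::finite \<Rightarrow> 'm::finite \<Rightarrow> real) \<Rightarrow> ('n \<Rightarrow> 'x) \<Rightarrow> ('m \<Rightarrow> 'y) \<Rightarrow> 'n \<Rightarrow> 'm \<Rightarrow> real)
   \<Rightarrow> ('n \<Rightarrow> 'm \<Rightarrow> real) \<Rightarrow> ('n \<Rightarrow> 'x) \<Rightarrow> ('m \<Rightarrow> 'y) \<Rightarrow> 'n \<Rightarrow> 'm \<Rightarrow> real" where
  "Q3g g v x y i j =
     (\<Sum>\<pi>\<in>{\<pi>. \<pi> permutes (UNIV::'n set)}. \<Sum>\<tau>\<in>{\<tau>. \<tau> permutes (UNIV::'m set)}.
        g (colperm \<tau> (rowperm \<pi> v)) (rowperm \<pi> x) (\<lambda>j. y (\<tau> j)) (inv \<pi> i) (inv \<tau> j))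
     / (fact CARD('n) * fact CARD('m))"

definition Q3p ::
  "(('n::finite \<Rightarrow> 'm::finite \<Rightarrow> real) \<Rightarrow> ('n \<Rightarrow> 'x) \<Rightarrow> ('m \<Rightarrow> 'y) \<Rightarrow> 'n \<Rightarrow> real)
   \<Rightarrow> ('n \<Rightarrow> 'm \<Rightarrow> real) \<Rightarrow> ('n \<Rightarrow> 'x) \<Rightarrow> ('m \<Rightarrow> 'y) \<Rightarrow> 'n \<Rightarrow> real" where
  "Q3p p v x y i =
     (\<Sum>\<pi>\<in>{\<pi>. \<pi> permutes (UNIV::'n set)}. \<Sum>\<tau>\<in>{\<tau>. \<tau> permutes (UNIV::'m set)}.
        p (colperm \<tau> (rowperm \<pi> v)) (rowperm \<pi> x) (\<lambda>j. y (\<tau> j)) (inv \<pi> i))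
     / (fact CARD('n) * fact CARD('m))"

definition util ::
  "(('n \<Rightarrow> 'm::finite \<Rightarrow> real) \<Rightarrow> ('n \<Rightarrow> 'x) \<Rightarrow> ('m \<Rightarrow> 'y) \<Rightarrow> 'n \<Rightarrow> 'm \<Rightarrow> real)
   \<Rightarrow> (('n \<Rightarrow> 'm \<Rightarrow> real) \<Rightarrow> ('n \<Rightarrow> 'x) \<Rightarrow> ('m \<Rightarrow> 'y) \<Rightarrow> 'n \<Rightarrow> real)
   \<Rightarrow> ('m \<Rightarrow> real) \<Rightarrow> ('n \<Rightarrow> 'm \<Rightarrow> real) \<Rightarrow> ('n \<Rightarrow> 'x) \<Rightarrow> ('m \<Rightarrow> 'y) \<Rightarrow> 'n \<Rightarrow> real" where
  "util g p vi b x y i = (\<Sum>j\<in>UNIV. g b x y i j * vi j) - p b x y i"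

text \<open>Ex-post regret (the maximum is written as a supremum; attainment is assumed separately).\<close>
definition regret ::
  "real set
   \<Rightarrow> (('n \<Rightarrow> 'm::finite \<Rightarrow> real) \<Rightarrow> ('n \<Rightarrow> 'x) \<Rightarrow> ('m \<Rightarrow> 'y) \<Rightarrow> 'n \<Rightarrow> 'm \<Rightarrow> real)
   \<Rightarrow> (('n \<Rightarrow> 'm \<Rightarrow> real) \<Rightarrow> ('n \<Rightarrow> 'x) \<Rightarrow> ('m \<Rightarrow> 'y) \<Rightarrow> 'n \<Rightarrow> real)
   \<Rightarrow> ('n \<Rightarrow> 'm \<Rightarrow> real) \<Rightarrow> ('n \<Rightarrow> 'x) \<Rightarrow> ('m \<Rightarrow> 'y) \<Rightarrow> 'n \<Rightarrow> real" where
  "regret V g p v x y i =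
     (SUP b' \<in> Vvec V. util g p (v i) (v(i := b')) x y i) - util g p (v i) v x y i"

definition Delta3 ::
  "real set
   \<Rightarrow> (('n::finite \<Rightarrow> 'm::finite \<Rightarrow> real) \<Rightarrow> ('n \<Rightarrow> 'x) \<Rightarrow> ('m \<Rightarrow> 'y) \<Rightarrow> 'n \<Rightarrow> 'm \<Rightarrow> real)
   \<Rightarrow> (('n \<Rightarrow> 'm \<Rightarrow> real) \<Rightarrow> ('n \<Rightarrow> 'x) \<Rightarrow> ('m \<Rightarrow> 'y) \<Rightarrow> 'n \<Rightarrow> real)
   \<Rightarrow> ('n \<Rightarrow> 'm \<Rightarrow> real) \<Rightarrow> ('n \<Rightarrow> 'x) \<Rightarrow> ('m \<Rightarrow> 'y) \<Rightarrow> real" where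
  "Delta3 V g p v x y =
     (SUP v' \<in> Vmat V. \<Sum>i\<in>UNIV. util g p (v i) (v(i := v' i)) x y i)
   - (SUP v' \<in> Vmat V. \<Sum>i\<in>UNIV. util (Q3g g) (Q3p p) (v i) (v(i := v' i)) x y i)"

end

theory Submission
  imports Defs
begin

(*
  Every permutation of bidders and items maps the law of (v, x, y) to itself, so averaging a
  function over the group does not change its expectation. The truthful utilities and the
  payments of the averaged mechanism are exactly such group averages of those of (g, p),
  which gives the payment identity and equal expected truthful welfare; the regret gap is
  then the gap between the expected best-response welfares. Best responses separate across
  bidders, and the best response of a bidder in the averaged mechanism is an average of
  responses in permuted copies of (g, p), each bounded by the best response there: the
  maximum of an average is at most the average of the maxima.
*)

type_synonym ('n, 'm, 'x, 'y) profile = "('n \<Rightarrow> 'm \<Rightarrow> real) \<times> ('n \<Rightarrow> 'x) \<times> ('m \<Rightarrow> 'y)"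

definition perm_act ::
  "('n \<Rightarrow> 'n) \<Rightarrow> ('m \<Rightarrow> 'm) \<Rightarrow> ('n, 'm, 'x, 'y) profile \<Rightarrow> ('n, 'm, 'x, 'y) profile" where
  "perm_act \<pi> \<tau> = (\<lambda>(v, x, y). (colperm \<tau> (rowperm \<pi> v), rowperm \<pi> x, \<lambda>j. y (\<tau> j)))"

definition perm_avg ::
  "(('n::finite, 'm::finite, 'x, 'y) profile \<Rightarrow> real) \<Rightarrow> ('n, 'm, 'x, 'y) profile \<Rightarrow> real" where
  "perm_avg f \<omega> =
     (\<Sum>\<pi>\<in>{\<pi>. \<pi> permutes UNIV}. \<Sum>\<tau>\<in>{\<tau>. \<tau> permutes UNIV}. f (perm_act \<pi> \<tau> \<omega>))
     / (fact CARD('n) * fact CARD('m))"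

lemma perm_act_apply [simp]:
  "perm_act \<pi> \<tau> (v, x, y) = (colperm \<tau> (rowperm \<pi> v), rowperm \<pi> x, \<lambda>j. y (\<tau> j))"
  by (simp add: perm_act_def)

lemma sum_permutes_inv_swap:
  fixes F :: "('n::finite \<Rightarrow> 'n) \<Rightarrow> 'b \<Rightarrow> 'n \<Rightarrow> 'a::comm_monoid_add"
  shows "(\<Sum>i\<in>UNIV. \<Sum>\<pi>\<in>{\<pi>. \<pi> permutes UNIV}. \<Sum>\<tau>\<in>A. F \<pi> \<tau> (inv \<pi> i))
       = (\<Sum>\<pi>\<in>{\<pi>. \<pi> permutes UNIV}. \<Sum>\<tau>\<in>A. \<Sum>i\<in>UNIV. F \<pi> \<tau> i)"
proof -
  have "(\<Sum>i\<in>UNIV. F \<pi> \<tau> (inv \<pi> i)) = (\<Sum>i\<in>UNIV. F \<pi> \<tau> i)" if "\<pi> permutes UNIV" for \<pi> \<tau>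
    using sum.permute[OF permutes_inv[OF that], of "F \<pi> \<tau>"] by (simp add: comp_def)
  then show ?thesis
    by (subst sum.swap) (simp add: sum.swap[where A = UNIV])
qed

definition total_payment ::
  "(('n \<Rightarrow> 'm \<Rightarrow> real) \<Rightarrow> ('n \<Rightarrow> 'x) \<Rightarrow> ('m \<Rightarrow> 'y) \<Rightarrow> 'n::finite \<Rightarrow> real)
   \<Rightarrow> ('n, 'm, 'x, 'y) profile \<Rightarrow> real" where
  "total_payment p = (\<lambda>(v, x, y). \<Sum>i\<in>UNIV. p v x y i)"

definition total_utility ::
  "(('n \<Rightarrow> 'm::finite \<Rightarrow> real) \<Rightarrow> ('n \<Rightarrow> 'x) \<Rightarrow> ('m \<Rightarrow> 'y) \<Rightarrow> 'n \<Rightarrow> 'm \<Rightarrow> real)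
   \<Rightarrow> (('n \<Rightarrow> 'm \<Rightarrow> real) \<Rightarrow> ('n \<Rightarrow> 'x) \<Rightarrow> ('m \<Rightarrow> 'y) \<Rightarrow> 'n::finite \<Rightarrow> real)
   \<Rightarrow> ('n, 'm, 'x, 'y) profile \<Rightarrow> real" where
  "total_utility g p = (\<lambda>(v, x, y). \<Sum>i\<in>UNIV. util g p (v i) v x y i)"

definition total_best_utility ::
  "real set
   \<Rightarrow> (('n \<Rightarrow> 'm::finite \<Rightarrow> real) \<Rightarrow> ('n \<Rightarrow> 'x) \<Rightarrow> ('m \<Rightarrow> 'y) \<Rightarrow> 'n \<Rightarrow> 'm \<Rightarrow> real)
   \<Rightarrow> (('n \<Rightarrow> 'm \<Rightarrow> real) \<Rightarrow> ('n \<Rightarrow> 'x) \<Rightarrow> ('m \<Rightarrow> 'y) \<Rightarrow> 'n::finite \<Rightarrow> real)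
   \<Rightarrow> ('n, 'm, 'x, 'y) profile \<Rightarrow> real" where
  "total_best_utility V g p =
     (\<lambda>(v, x, y). \<Sum>i\<in>UNIV. SUP b\<in>Vvec V. util g p (v i) (v(i := b)) x y i)"

lemma total_payment_Q3p:
  fixes p :: "('n::finite \<Rightarrow> 'm::finite \<Rightarrow> real) \<Rightarrow> ('n \<Rightarrow> 'x) \<Rightarrow> ('m \<Rightarrow> 'y) \<Rightarrow> 'n \<Rightarrow> real"
  shows "total_payment (Q3p p) = perm_avg (total_payment p)"
proof (rule ext)
  fix \<omega> :: "('n, 'm, 'x, 'y) profile"
  obtain v x y where fields: "\<omega> = (v, x, y)"
    by (cases \<omega>)
  have "(\<Sum>i\<in>UNIV. \<Sum>\<pi>\<in>{\<pi>. \<pi> permutes UNIV}. \<Sum>\<tau>\<in>{\<tau>. \<tau> permutes UNIV}.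
          p (colperm \<tau> (rowperm \<pi> v)) (rowperm \<pi> x) (\<lambda>j. y (\<tau> j)) (inv \<pi> i))
      = (\<Sum>\<pi>\<in>{\<pi>. \<pi> permutes UNIV}. \<Sum>\<tau>\<in>{\<tau>. \<tau> permutes UNIV}. \<Sum>i\<in>UNIV.
          p (colperm \<tau> (rowperm \<pi> v)) (rowperm \<pi> x) (\<lambda>j. y (\<tau> j)) i)"
    by (rule sum_permutes_inv_swap)
  then show "total_payment (Q3p p) \<omega> = perm_avg (total_payment p) \<omega>"
    by (simp add: fields total_payment_def perm_avg_def Q3p_def flip: sum_divide_distrib)
qed

lemma util_Q3g_Q3p:
  fixes g :: "('n::finite \<Rightarrow> 'm::finite \<Rightarrow> real) \<Rightarrow> ('n \<Rightarrow> 'x) \<Rightarrow> ('m \<Rightarrow> 'y) \<Rightarrow> 'n \<Rightarrow> 'm \<Rightarrow> real"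
  shows "util (Q3g g) (Q3p p) vi b x y i =
    (\<Sum>\<pi>\<in>{\<pi>. \<pi> permutes UNIV}. \<Sum>\<tau>\<in>{\<tau>. \<tau> permutes UNIV}.
       util g p (\<lambda>j. vi (\<tau> j)) (colperm \<tau> (rowperm \<pi> b)) (rowperm \<pi> x) (\<lambda>j. y (\<tau> j)) (inv \<pi> i))
    / (fact CARD('n) * fact CARD('m))"
proof -
  have "(\<Sum>j\<in>UNIV. h (inv \<tau> j) * vi j) = (\<Sum>j\<in>UNIV. h j * vi (\<tau> j))"
    if "\<tau> permutes UNIV" for \<tau> and h :: "'m \<Rightarrow> real"
    using sum.permute[OF that, of "\<lambda>j. h (inv \<tau> j) * vi j"] that
    by (simp add: comp_def permutes_inverses)
  then have "(\<Sum>j\<in>UNIV. Q3g g b x y i j * vi j) =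
     (\<Sum>\<pi>\<in>{\<pi>. \<pi> permutes UNIV}. \<Sum>\<tau>\<in>{\<tau>. \<tau> permutes UNIV}. \<Sum>j\<in>UNIV.
       g (colperm \<tau> (rowperm \<pi> b)) (rowperm \<pi> x) (\<lambda>j. y (\<tau> j)) (inv \<pi> i) j * vi (\<tau> j))
     / (fact CARD('n) * fact CARD('m))"
    by (simp add: Q3g_def sum_distrib_right sum.swap[where A = UNIV] flip: sum_divide_distrib)
  then show ?thesis
    by (simp add: util_def Q3p_def sum_subtractf diff_divide_distrib)
qed

lemma colperm_rowperm_fun_upd:
  assumes "\<pi> permutes UNIV"
  shows "colperm \<tau> (rowperm \<pi> (v(i := b))) = (colperm \<tau> (rowperm \<pi> v))(inv \<pi> i := (\<lambda>j. b (\<tau> j)))"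
  using assms by (auto simp: colperm_def rowperm_def fun_eq_iff permutes_inverses)

lemma colperm_rowperm_row:
  assumes "\<pi> permutes UNIV"
  shows "colperm \<tau> (rowperm \<pi> v) (inv \<pi> i) = (\<lambda>j. v i (\<tau> j))"
  using assms by (simp add: colperm_def rowperm_def permutes_inverses)

lemma total_utility_Q3g_Q3p:
  fixes g :: "('n::finite \<Rightarrow> 'm::finite \<Rightarrow> real) \<Rightarrow> ('n \<Rightarrow> 'x) \<Rightarrow> ('m \<Rightarrow> 'y) \<Rightarrow> 'n \<Rightarrow> 'm \<Rightarrow> real"
    and p :: "('n \<Rightarrow> 'm \<Rightarrow> real) \<Rightarrow> ('n \<Rightarrow> 'x) \<Rightarrow> ('m \<Rightarrow> 'y) \<Rightarrow> 'n \<Rightarrow> real"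
  shows "total_utility (Q3g g) (Q3p p) = perm_avg (total_utility g p)"
proof (rule ext)
  fix \<omega> :: "('n, 'm, 'x, 'y) profile"
  obtain v x y where fields: "\<omega> = (v, x, y)"
    by (cases \<omega>)
  let ?F = "\<lambda>\<pi> \<tau> k. util g p (colperm \<tau> (rowperm \<pi> v) k) (colperm \<tau> (rowperm \<pi> v))
                       (rowperm \<pi> x) (\<lambda>j. y (\<tau> j)) k"
  have "(\<Sum>i\<in>UNIV. \<Sum>\<pi>\<in>{\<pi>. \<pi> permutes UNIV}. \<Sum>\<tau>\<in>{\<tau>. \<tau> permutes UNIV}.
          util g p (\<lambda>j. v i (\<tau> j)) (colperm \<tau> (rowperm \<pi> v)) (rowperm \<pi> x) (\<lambda>j. y (\<tau> j)) (inv \<pi> i))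
      = (\<Sum>i\<in>UNIV. \<Sum>\<pi>\<in>{\<pi>. \<pi> permutes UNIV}. \<Sum>\<tau>\<in>{\<tau>. \<tau> permutes UNIV}. ?F \<pi> \<tau> (inv \<pi> i))"
    by (intro sum.cong refl) (simp add: colperm_rowperm_row)
  also have "\<dots> = (\<Sum>\<pi>\<in>{\<pi>. \<pi> permutes UNIV}. \<Sum>\<tau>\<in>{\<tau>. \<tau> permutes UNIV}. \<Sum>k\<in>UNIV. ?F \<pi> \<tau> k)"
    by (rule sum_permutes_inv_swap)
  finally show "total_utility (Q3g g) (Q3p p) \<omega> = perm_avg (total_utility g p) \<omega>"
    by (simp add: fields total_utility_def perm_avg_def util_Q3g_Q3p flip: sum_divide_distrib)
qed

lemma total_best_utility_Q3g_Q3p_le: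
  fixes g :: "('n::finite \<Rightarrow> 'm::finite \<Rightarrow> real) \<Rightarrow> ('n \<Rightarrow> 'x) \<Rightarrow> ('m \<Rightarrow> 'y) \<Rightarrow> 'n \<Rightarrow> 'm \<Rightarrow> real"
  assumes nonempty: "Vvec V \<noteq> ({} :: ('m \<Rightarrow> real) set)"
    and closed: "\<And>\<pi> \<tau>. \<pi> permutes UNIV \<Longrightarrow> \<tau> permutes UNIV \<Longrightarrow> perm_act \<pi> \<tau> \<omega> \<in> S"
    and bdd: "\<And>v x y k. (v, x, y) \<in> S \<Longrightarrow> bdd_above ((\<lambda>b. util g p (v k) (v(k := b)) x y k) ` Vvec V)"
  shows "total_best_utility V (Q3g g) (Q3p p) \<omega> \<le> perm_avg (total_best_utility V g p) \<omega>"
proof (cases \<omega>)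
  case (fields v x y)
  define B where "B \<pi> \<tau> k =
    (SUP b\<in>Vvec V. util g p (colperm \<tau> (rowperm \<pi> v) k) ((colperm \<tau> (rowperm \<pi> v))(k := b))
                    (rowperm \<pi> x) (\<lambda>j. y (\<tau> j)) k)" for \<pi> \<tau> k
  have best_response_le: "(SUP b\<in>Vvec V. util (Q3g g) (Q3p p) (v i) (v(i := b)) x y i)
    \<le> (\<Sum>\<pi>\<in>{\<pi>. \<pi> permutes UNIV}. \<Sum>\<tau>\<in>{\<tau>. \<tau> permutes UNIV}. B \<pi> \<tau> (inv \<pi> i))
       / (fact CARD('n) * fact CARD('m))" for i
  proof (rule cSUP_least[OF nonempty])
    fix b :: "'m \<Rightarrow> real" assume b: "b \<in> Vvec V"
    have "util g p (\<lambda>j. v i (\<tau> j)) (colperm \<tau> (rowperm \<pi> (v(i := b)))) (rowperm \<pi> x) (\<lambda>j. y (\<tau> j)) (inv \<pi> i)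
          \<le> B \<pi> \<tau> (inv \<pi> i)" if "\<pi> permutes UNIV" "\<tau> permutes UNIV" for \<pi> \<tau>
    proof -
      have "(\<lambda>j. b (\<tau> j)) \<in> Vvec V"
        using b by (simp add: Vvec_def)
      moreover have "perm_act \<pi> \<tau> (v, x, y) \<in> S"
        using closed[OF that] by (simp only: fields)
      ultimately show ?thesis
        unfolding B_def colperm_rowperm_fun_upd[OF that(1)] colperm_rowperm_row[OF that(1), symmetric]
        by (intro cSUP_upper bdd) simp_all
    qed
    then show "util (Q3g g) (Q3p p) (v i) (v(i := b)) x y i
      \<le> (\<Sum>\<pi>\<in>{\<pi>. \<pi> permutes UNIV}. \<Sum>\<tau>\<in>{\<tau>. \<tau> permutes UNIV}. B \<pi> \<tau> (inv \<pi> i))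
         / (fact CARD('n) * fact CARD('m))"
      unfolding util_Q3g_Q3p by (intro divide_right_mono sum_mono) auto
  qed
  have "total_best_utility V (Q3g g) (Q3p p) \<omega>
    \<le> (\<Sum>i\<in>UNIV. (\<Sum>\<pi>\<in>{\<pi>. \<pi> permutes UNIV}. \<Sum>\<tau>\<in>{\<tau>. \<tau> permutes UNIV}. B \<pi> \<tau> (inv \<pi> i))
       / (fact CARD('n) * fact CARD('m)))"
    unfolding fields total_best_utility_def by (simp add: sum_mono best_response_le)
  also have "\<dots> = perm_avg (total_best_utility V g p) \<omega>"
    unfolding sum_divide_distrib[symmetric] sum_permutes_inv_swap
    by (simp add: fields perm_avg_def total_best_utility_def B_def)
  finally show ?thesis .
qed

lemma SUP_Vmat_sum_eq:
  fixes f :: "'n::finite \<Rightarrow> ('m \<Rightarrow> real) \<Rightarrow> real"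
  assumes "\<And>i. \<exists>b\<in>Vvec V. \<forall>b'\<in>Vvec V. f i b' \<le> f i b"
  shows "(SUP v'\<in>Vmat V. \<Sum>i\<in>UNIV. f i (v' i)) = (\<Sum>i\<in>UNIV. SUP b\<in>Vvec V. f i b)"
proof -
  obtain B where B: "\<And>i. B i \<in> Vvec V" "\<And>i b. b \<in> Vvec V \<Longrightarrow> f i b \<le> f i (B i)"
    using assms by metis
  have rows: "v' \<in> Vmat V \<longleftrightarrow> (\<forall>i. v' i \<in> Vvec V)" for v' :: "'n \<Rightarrow> 'm \<Rightarrow> real"
    by (simp add: Vmat_def Vvec_def)
  have "(SUP b\<in>Vvec V. f i b) = f i (B i)" for i
    by (rule cSup_eq_maximum) (use B in auto)
  moreover have "(SUP v'\<in>Vmat V. \<Sum>i\<in>UNIV. f i (v' i)) = (\<Sum>i\<in>UNIV. f i (B i))"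
    by (rule cSup_eq_maximum) (use B rows in \<open>auto intro!: sum_mono\<close>)
  ultimately show ?thesis
    by simp
qed

lemma Delta3_eq_total_best_utility_diff:
  assumes "\<And>i. \<exists>b\<in>Vvec V. \<forall>b'\<in>Vvec V. util g p (v i) (v(i := b')) x y i \<le> util g p (v i) (v(i := b)) x y i"
    and "\<And>i. \<exists>b\<in>Vvec V. \<forall>b'\<in>Vvec V. util (Q3g g) (Q3p p) (v i) (v(i := b')) x y i
                                     \<le> util (Q3g g) (Q3p p) (v i) (v(i := b)) x y i"
  shows "Delta3 V g p v x y
    = total_best_utility V g p (v, x, y) - total_best_utility V (Q3g g) (Q3p p) (v, x, y)"
  unfolding Delta3_def total_best_utility_def
  by (simp add: SUP_Vmat_sum_eq[OF assms(1)] SUP_Vmat_sum_eq[OF assms(2)])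

lemma sum_regret_eq:
  "(\<lambda>(v, x, y). \<Sum>i\<in>UNIV. regret V g p v x y i)
   = (\<lambda>\<omega>. total_best_utility V g p \<omega> - total_utility g p \<omega>)"
  by (auto simp: fun_eq_iff regret_def total_best_utility_def total_utility_def sum_subtractf)

lemma
  fixes T :: "'i \<Rightarrow> 'a \<Rightarrow> 'a" and f :: "'a \<Rightarrow> real"
  assumes "finite I"
    and preserving: "\<And>t. t \<in> I \<Longrightarrow> T t \<in> M \<rightarrow>\<^sub>M M \<and> distr M M (T t) = M"
    and f: "integrable M f"
  shows integrable_sum_measure_preserving: "integrable M (\<lambda>\<omega>. \<Sum>t\<in>I. f (T t \<omega>))"
    and integral_sum_measure_preserving: "(\<integral>\<omega>. (\<Sum>t\<in>I. f (T t \<omega>)) \<partial>M) = card I * integral\<^sup>L M f"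
proof -
  have each: "integrable M (\<lambda>\<omega>. f (T t \<omega>)) \<and> (\<integral>\<omega>. f (T t \<omega>) \<partial>M) = integral\<^sup>L M f" if "t \<in> I" for t
  proof -
    have "T t \<in> M \<rightarrow>\<^sub>M M" "distr M M (T t) = M"
      using preserving[OF that] by auto
    then show ?thesis
      using integrable_distr_eq[of "T t" M M f] integral_distr[of "T t" M M f] f by auto
  qed
  then show "integrable M (\<lambda>\<omega>. \<Sum>t\<in>I. f (T t \<omega>))"
    by auto
  then show "(\<integral>\<omega>. (\<Sum>t\<in>I. f (T t \<omega>)) \<partial>M) = card I * integral\<^sup>L M f"
    using each by (simp add: Bochner_Integration.integral_sum)
qed

lemma measure_preserving_comp:
  assumes "f \<in> M \<rightarrow>\<^sub>M M" "distr M M f = M" "g \<in> M \<rightarrow>\<^sub>M M" "distr M M g = M"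
  shows "g \<circ> f \<in> M \<rightarrow>\<^sub>M M \<and> distr M M (g \<circ> f) = M"
  using measurable_comp[OF assms(1,3)] distr_distr[OF assms(3,1)] assms(2,4) by simp

lemma perm_act_measure_preserving:
  fixes M :: "('n, 'm, 'x, 'y) profile measure"
  assumes bidder_sym: "\<And>\<pi>. \<pi> permutes (UNIV::'n set) \<Longrightarrow>
        (\<lambda>(v, x, y). (rowperm \<pi> v, rowperm \<pi> x, y)) \<in> M \<rightarrow>\<^sub>M M
        \<and> distr M M (\<lambda>(v, x, y). (rowperm \<pi> v, rowperm \<pi> x, y)) = M"
    and item_sym: "\<And>\<tau>. \<tau> permutes (UNIV::'m set) \<Longrightarrow>
        (\<lambda>(v, x, y). (colperm \<tau> v, x, (\<lambda>j. y (\<tau> j)))) \<in> M \<rightarrow>\<^sub>M M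
        \<and> distr M M (\<lambda>(v, x, y). (colperm \<tau> v, x, (\<lambda>j. y (\<tau> j)))) = M"
    and "\<pi> permutes UNIV" "\<tau> permutes UNIV"
  shows "perm_act \<pi> \<tau> \<in> M \<rightarrow>\<^sub>M M \<and> distr M M (perm_act \<pi> \<tau>) = M"
proof -
  have "perm_act \<pi> \<tau>
      = (\<lambda>(v, x, y). (colperm \<tau> v, x, (\<lambda>j. y (\<tau> j)))) \<circ> (\<lambda>(v, x, y). (rowperm \<pi> v, rowperm \<pi> x, y))"
    by (auto simp: perm_act_def fun_eq_iff)
  then show ?thesis
    using bidder_sym[OF assms(3)] item_sym[OF assms(4)] by (metis measure_preserving_comp)
qed

lemma
  fixes M :: "('n::finite, 'm::finite, 'x, 'y) profile measure"
  assumes preserving: "\<And>\<pi> \<tau>. \<pi> permutes UNIV \<Longrightarrow> \<tau> permutes UNIV \<Longrightarrow>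
      perm_act \<pi> \<tau> \<in> M \<rightarrow>\<^sub>M M \<and> distr M M (perm_act \<pi> \<tau>) = M"
    and f: "integrable M f"
  shows integrable_perm_avg: "integrable M (perm_avg f)"
    and integral_perm_avg: "integral\<^sup>L M (perm_avg f) = integral\<^sup>L M f"
proof -
  let ?P = "{\<pi>::'n \<Rightarrow> 'n. \<pi> permutes UNIV} \<times> {\<tau>::'m \<Rightarrow> 'm. \<tau> permutes UNIV}"
  have card: "card ?P = fact CARD('n) * fact CARD('m)"
    by (simp add: card_cartesian_product card_permutations)
  have finite: "finite ?P"
    by (simp add: finite_permutations)
  have avg: "perm_avg f = (\<lambda>\<omega>. (\<Sum>t\<in>?P. f (case_prod perm_act t \<omega>)) / card ?P)"
    by (simp add: fun_eq_iff perm_avg_def sum.cartesian_product card case_prod_unfold)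
  have "integrable M (\<lambda>\<omega>. \<Sum>t\<in>?P. f (case_prod perm_act t \<omega>))"
    using finite preserving f by (intro integrable_sum_measure_preserving) auto
  then show "integrable M (perm_avg f)"
    unfolding avg by simp
  have "(\<integral>\<omega>. (\<Sum>t\<in>?P. f (case_prod perm_act t \<omega>)) \<partial>M) = card ?P * integral\<^sup>L M f"
    using finite preserving f by (intro integral_sum_measure_preserving) auto
  then show "integral\<^sup>L M (perm_avg f) = integral\<^sup>L M f"
    unfolding avg card by simp
qed

lemma integrable_sum_profile:
  fixes f :: "('n \<Rightarrow> 'm \<Rightarrow> real) \<Rightarrow> ('n \<Rightarrow> 'x) \<Rightarrow> ('m \<Rightarrow> 'y) \<Rightarrow> 'i \<Rightarrow> real"
  assumes "\<And>i. integrable M (\<lambda>(v, x, y). f v x y i)"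
  shows "integrable M (\<lambda>(v, x, y). \<Sum>i\<in>I. f v x y i)"
  using Bochner_Integration.integrable_sum[of I M "\<lambda>i (v, x, y). f v x y i"] assms
  by (simp add: split_beta')

lemma integrable_total_utility:
  assumes "\<And>i j. integrable M (\<lambda>(v, x, y). g v x y i j * v i j)"
    and "\<And>i. integrable M (\<lambda>(v, x, y). p v x y i)"
  shows "integrable M (total_utility g p)"
proof -
  have "integrable M (\<lambda>(v, x, y). util g p (v i) v x y i)" for i
    unfolding util_def split_beta'
    by (intro Bochner_Integration.integrable_diff integrable_sum_profile[OF assms(1), unfolded split_beta'])
      (use assms(2) in \<open>simp add: split_beta'\<close>)
  then show ?thesis
    unfolding total_utility_def by (rule integrable_sum_profile)
qed

lemma integrable_total_best_utility:
  assumes "\<And>i. integrable M (\<lambda>(v, x, y). regret V g p v x y i)"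
    and "integrable M (total_utility g p)"
  shows "integrable M (total_best_utility V g p)"
proof -
  have "integrable M (\<lambda>\<omega>. total_best_utility V g p \<omega> - total_utility g p \<omega>)"
    using integrable_sum_profile[where f = "regret V g p" and I = UNIV, OF assms(1)]
    unfolding sum_regret_eq .
  from Bochner_Integration.integrable_add[OF this assms(2)] show ?thesis
    by simp
qed

lemma integral_sum_regret:
  assumes "integrable M (total_best_utility V g p)" "integrable M (total_utility g p)"
  shows "(\<integral>(v, x, y). (\<Sum>i\<in>UNIV. regret V g p v x y i) \<partial>M)
    = integral\<^sup>L M (total_best_utility V g p) - integral\<^sup>L M (total_utility g p)"
  unfolding sum_regret_eq by (rule Bochner_Integration.integral_diff[OF assms])

lemma integral_Delta3_eq:
  assumes "\<And>v x y i. (v, x, y) \<in> space M \<Longrightarrow>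
        \<exists>b \<in> Vvec V. \<forall>b' \<in> Vvec V. util g p (v i) (v(i := b')) x y i \<le> util g p (v i) (v(i := b)) x y i"
    and "\<And>v x y i. (v, x, y) \<in> space M \<Longrightarrow>
        \<exists>b \<in> Vvec V. \<forall>b' \<in> Vvec V. util (Q3g g) (Q3p p) (v i) (v(i := b')) x y i
                                   \<le> util (Q3g g) (Q3p p) (v i) (v(i := b)) x y i"
    and "integrable M (total_best_utility V g p)" "integrable M (total_best_utility V (Q3g g) (Q3p p))"
  shows "(\<integral>(v, x, y). Delta3 V g p v x y \<partial>M)
    = integral\<^sup>L M (total_best_utility V g p) - integral\<^sup>L M (total_best_utility V (Q3g g) (Q3p p))"
proof -
  have "(\<integral>(v, x, y). Delta3 V g p v x y \<partial>M)
      = (\<integral>\<omega>. total_best_utility V g p \<omega> - total_best_utility V (Q3g g) (Q3p p) \<omega> \<partial>M)"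
    using assms(1,2) by (intro Bochner_Integration.integral_cong) (auto simp: Delta3_eq_total_best_utility_diff)
  then show ?thesis
    using assms(3,4) by simp
qed

lemma integral_total_best_utility_Q3g_Q3p_le:
  fixes M :: "('n::finite, 'm::finite, 'x, 'y) profile measure"
  assumes "prob_space M"
    and preserving: "\<And>\<pi> \<tau>. \<pi> permutes UNIV \<Longrightarrow> \<tau> permutes UNIV \<Longrightarrow>
      perm_act \<pi> \<tau> \<in> M \<rightarrow>\<^sub>M M \<and> distr M M (perm_act \<pi> \<tau>) = M"
    and attained: "\<And>v x y i. (v, x, y) \<in> space M \<Longrightarrow>
        \<exists>b \<in> Vvec V. \<forall>b' \<in> Vvec V. util g p (v i) (v(i := b')) x y i \<le> util g p (v i) (v(i := b)) x y i"
    and int_B: "integrable M (total_best_utility V g p)"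
    and int_B3: "integrable M (total_best_utility V (Q3g g) (Q3p p))"
  shows "integral\<^sup>L M (total_best_utility V (Q3g g) (Q3p p)) \<le> integral\<^sup>L M (total_best_utility V g p)"
proof -
  have nonempty: "Vvec V \<noteq> ({} :: ('m \<Rightarrow> real) set)"
    using attained prob_space.not_empty[OF assms(1)] by fastforce
  have bdd: "bdd_above ((\<lambda>b. util g p (v i) (v(i := b)) x y i) ` Vvec V)" if "(v, x, y) \<in> space M" for v x y i
    using attained[OF that, of i] by (auto intro: bdd_aboveI2)
  have "total_best_utility V (Q3g g) (Q3p p) \<omega> \<le> perm_avg (total_best_utility V g p) \<omega>"
    if "\<omega> \<in> space M" for \<omega>
  proof (rule total_best_utility_Q3g_Q3p_le[OF nonempty _ bdd])
    show "perm_act \<pi> \<tau> \<omega> \<in> space M" if "\<pi> permutes UNIV" "\<tau> permutes UNIV" for \<pi> \<tau>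
      using preserving[OF that] \<open>\<omega> \<in> space M\<close> by (meson measurable_space)
  qed
  then have "integral\<^sup>L M (total_best_utility V (Q3g g) (Q3p p))
      \<le> integral\<^sup>L M (perm_avg (total_best_utility V g p))"
    by (intro integral_mono int_B3 integrable_perm_avg[OF preserving int_B])
  then show ?thesis
    by (simp only: integral_perm_avg[OF preserving int_B])
qed

theorem theorem2:
  fixes g :: "('n::finite \<Rightarrow> 'm::finite \<Rightarrow> real) \<Rightarrow> ('n \<Rightarrow> 'x) \<Rightarrow> ('m \<Rightarrow> 'y) \<Rightarrow> 'n \<Rightarrow> 'm \<Rightarrow> real"
    and p :: "('n \<Rightarrow> 'm \<Rightarrow> real) \<Rightarrow> ('n \<Rightarrow> 'x) \<Rightarrow> ('m \<Rightarrow> 'y) \<Rightarrow> 'n \<Rightarrow> real"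
    and V :: "real set"
    and M :: "(('n \<Rightarrow> 'm \<Rightarrow> real) \<times> ('n \<Rightarrow> 'x) \<times> ('m \<Rightarrow> 'y)) measure"
  assumes V_nonneg: "V \<subseteq> {0..}"
    and prob: "prob_space M"
    and valued: "\<forall>(v, x, y) \<in> space M. v \<in> Vmat V"
    and bidder_sym: "\<And>\<pi>. \<pi> permutes (UNIV::'n set) \<Longrightarrow>
        (\<lambda>(v, x, y). (rowperm \<pi> v, rowperm \<pi> x, y)) \<in> M \<rightarrow>\<^sub>M M
        \<and> distr M M (\<lambda>(v, x, y). (rowperm \<pi> v, rowperm \<pi> x, y)) = M"
    and item_sym: "\<And>\<tau>. \<tau> permutes (UNIV::'m set) \<Longrightarrow>
        (\<lambda>(v, x, y). (colperm \<tau> v, x, (\<lambda>j. y (\<tau> j)))) \<in> M \<rightarrow>\<^sub>M M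
        \<and> distr M M (\<lambda>(v, x, y). (colperm \<tau> v, x, (\<lambda>j. y (\<tau> j)))) = M"
    and attained: "\<And>v x y i. (v, x, y) \<in> space M \<Longrightarrow>
        \<exists>b \<in> Vvec V. \<forall>b' \<in> Vvec V. util g p (v i) (v(i := b')) x y i \<le> util g p (v i) (v(i := b)) x y i"
    and attained_Q3: "\<And>v x y i. (v, x, y) \<in> space M \<Longrightarrow>
        \<exists>b \<in> Vvec V. \<forall>b' \<in> Vvec V. util (Q3g g) (Q3p p) (v i) (v(i := b')) x y i
                                   \<le> util (Q3g g) (Q3p p) (v i) (v(i := b)) x y i"
    and int_p: "\<And>i. integrable M (\<lambda>(v, x, y). p v x y i)"
    and int_Q3p: "\<And>i. integrable M (\<lambda>(v, x, y). Q3p p v x y i)"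
    and int_gv: "\<And>i j. integrable M (\<lambda>(v, x, y). g v x y i j * v i j)"
    and int_Q3gv: "\<And>i j. integrable M (\<lambda>(v, x, y). Q3g g v x y i j * v i j)"
    and int_reg: "\<And>i. integrable M (\<lambda>(v, x, y). regret V g p v x y i)"
    and int_Q3reg: "\<And>i. integrable M (\<lambda>(v, x, y). regret V (Q3g g) (Q3p p) v x y i)"
    and int_Delta: "integrable M (\<lambda>(v, x, y). Delta3 V g p v x y)"
  shows "(\<integral>(v, x, y). (\<Sum>i\<in>UNIV. Q3p p v x y i) \<partial>M) = (\<integral>(v, x, y). (\<Sum>i\<in>UNIV. p v x y i) \<partial>M)
    \<and> (\<integral>(v, x, y). (\<Sum>i\<in>UNIV. regret V g p v x y i) \<partial>M)
        - (\<integral>(v, x, y). (\<Sum>i\<in>UNIV. regret V (Q3g g) (Q3p p) v x y i) \<partial>M)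
      = (\<integral>(v, x, y). Delta3 V g p v x y \<partial>M)
    \<and> (\<integral>(v, x, y). Delta3 V g p v x y \<partial>M) \<ge> 0"
proof -
  have preserving: "\<And>\<pi> \<tau>. \<pi> permutes UNIV \<Longrightarrow> \<tau> permutes UNIV \<Longrightarrow>
      perm_act \<pi> \<tau> \<in> M \<rightarrow>\<^sub>M M \<and> distr M M (perm_act \<pi> \<tau>) = M"
    by (rule perm_act_measure_preserving[OF bidder_sym item_sym])
  have int_U: "integrable M (total_utility g p)"
    by (rule integrable_total_utility[OF int_gv int_p])
  have int_U3: "integrable M (total_utility (Q3g g) (Q3p p))"
    and E_U3: "integral\<^sup>L M (total_utility (Q3g g) (Q3p p)) = integral\<^sup>L M (total_utility g p)"
    using integrable_perm_avg[OF preserving int_U] integral_perm_avg[OF preserving int_U]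
    unfolding total_utility_Q3g_Q3p by auto
  have int_B: "integrable M (total_best_utility V g p)"
    by (rule integrable_total_best_utility[OF int_reg int_U])
  have int_B3: "integrable M (total_best_utility V (Q3g g) (Q3p p))"
    by (rule integrable_total_best_utility[OF int_Q3reg int_U3])
  have int_payment: "integrable M (total_payment p)"
    unfolding total_payment_def by (rule integrable_sum_profile[OF int_p])
  have E_Delta: "(\<integral>(v, x, y). Delta3 V g p v x y \<partial>M)
      = integral\<^sup>L M (total_best_utility V g p) - integral\<^sup>L M (total_best_utility V (Q3g g) (Q3p p))"
    by (rule integral_Delta3_eq[OF attained attained_Q3 int_B int_B3])
  have "(\<integral>(v, x, y). (\<Sum>i\<in>UNIV. Q3p p v x y i) \<partial>M) = (\<integral>(v, x, y). (\<Sum>i\<in>UNIV. p v x y i) \<partial>M)"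
    using integral_perm_avg[OF preserving int_payment]
    unfolding total_payment_Q3p[symmetric] by (simp add: total_payment_def)
  moreover have "(\<integral>(v, x, y). (\<Sum>i\<in>UNIV. regret V g p v x y i) \<partial>M)
        - (\<integral>(v, x, y). (\<Sum>i\<in>UNIV. regret V (Q3g g) (Q3p p) v x y i) \<partial>M)
      = (\<integral>(v, x, y). Delta3 V g p v x y \<partial>M)"
    unfolding integral_sum_regret[OF int_B int_U] integral_sum_regret[OF int_B3 int_U3] E_U3
    using E_Delta by simp
  moreover have "(\<integral>(v, x, y). Delta3 V g p v x y \<partial>M) \<ge> 0"
    using integral_total_best_utility_Q3g_Q3p_le[OF prob preserving attained int_B int_B3]
    unfolding E_Delta by simp
  ultimately show ?thesis
    by blast
qed

end
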